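(* Let $G$ be an abelian group and $\phi:G\to\mathbb{H}$ a function with $\phi(0)=1$ and $\sup_{g\in G}|\phi(g)|=1$ satisfying, for all $a,b\in G$, $$2\,\mathrm{Re}\,\phi(b)\,\mathrm{Re}\,\phi(a)=\mathrm{Re}\,\phi(a+b)+\mathrm{Re}\,\phi(a-b),\qquad 2\,\mathrm{Re}\,\phi(b)\,\mathrm{Im}\,\phi(a)=\mathrm{Im}\,\phi(a+b)+\mathrm{Im}\,\phi(a-b).$$ Then there exists an imaginary unit $I\in\mathbb{H}$ such that $\phi(G)\subseteq\mathbb{C}_I$.
   Context: $\mathbb{H}$ is the real quaternion algebra; for $q=a_0+a_1i_1+a_2i_2+a_3i_3$, $\mathrm{Re}\,q=a_0$, $\mathrm{Im}\,q=a_1i_1+a_2i_2+a_3i_3$, $|q|=\sqrt{a_0^2+a_1^2+a_2^2+a_3^2}$. An imaginary unit is a quaternion $I$ with $\mathrm{Re}\,I=0$, $|I|=1$; $\mathbb{C}_I=\mathbb{R}\oplus I\mathbb{R}$. *)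

theory Defs
  imports "HOL-Analysis.Analysis"
begin

datatype quat = Quat (qc0: real) (qc1: real) (qc2: real) (qc3: real)

definition qadd :: "quat \<Rightarrow> quat \<Rightarrow> quat" where
  "qadd p q = Quat (qc0 p + qc0 q) (qc1 p + qc1 q) (qc2 p + qc2 q) (qc3 p + qc3 q)"

definition qscale :: "real \<Rightarrow> quat \<Rightarrow> quat" where
  "qscale r q = Quat (r * qc0 q) (r * qc1 q) (r * qc2 q) (r * qc3 q)"

definition qof_real :: "real \<Rightarrow> quat" where
  "qof_real r = Quat r 0 0 0"

definition qRe :: "quat \<Rightarrow> real" where
  "qRe q = qc0 q"

definition qIm :: "quat \<Rightarrow> quat" where
  "qIm q = Quat 0 (qc1 q) (qc2 q) (qc3 q)"

definition qnorm :: "quat \<Rightarrow> real" where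
  "qnorm q = sqrt ((qc0 q)^2 + (qc1 q)^2 + (qc2 q)^2 + (qc3 q)^2)"

definition imag_unit :: "quat \<Rightarrow> bool" where
  "imag_unit I \<longleftrightarrow> qRe I = 0 \<and> qnorm I = 1"

definition C_slice :: "quat \<Rightarrow> quat set" where
  "C_slice I = {qadd (qof_real x) (qscale y I) | x y. True}"

end

theory Submission
  imports Defs
begin

text \<open>Each coordinate g of Im \<phi> solves the sine equation g(a+b) = f(b) g(a) + f(a) g(b) with
f = Re \<phi>. For two such solutions g, h and fixed a, the expression g(x) h(a) - h(x) g(a) is multiplied
by f(a) under both x \<mapsto> x + a and x \<mapsto> x - a, hence equals f(a)^2 times itself. So it vanishes unless
f(a)^2 = 1, and then |\<phi>(a)| \<le> 1 already forces Im \<phi>(a) = 0. Hence all imaginary parts Im \<phi>(x) are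
parallel to a single vector, whose normalisation is the required unit I.\<close>

lemma sine_addition_law:
  fixes f g :: "'a::ab_group_add \<Rightarrow> 'b::field_char_0"
  assumes "g 0 = 0" and "\<And>a b. 2 * f b * g a = g (a + b) + g (a - b)"
  shows "g (a + b) = f b * g a + f a * g b" and "g (a - b) = f b * g a - f a * g b"
proof -
  have odd: "g (- x) = - g x" for x
    using assms(2)[where a = 0 and b = x] assms(1) by (simp add: add_eq_0_iff)
  have diff: "2 * f a * g b = g (a + b) - g (a - b)"
    using assms(2)[where a = b and b = a] odd[of "a - b"] by (simp add: add.commute)
  have "2 * g (a + b) = 2 * (f b * g a + f a * g b)"
    and "2 * g (a - b) = 2 * (f b * g a - f a * g b)"
    using assms(2)[where a = a and b = b] diff by (simp_all add: algebra_simps)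
  then show "g (a + b) = f b * g a + f a * g b" and "g (a - b) = f b * g a - f a * g b"
    by (metis mult_cancel_left zero_neq_numeral)+
qed

lemma sine_solutions_proportional:
  fixes f g h :: "'a::ab_group_add \<Rightarrow> 'b::field_char_0"
  assumes "g 0 = 0" and "\<And>a b. 2 * f b * g a = g (a + b) + g (a - b)"
    and "h 0 = 0" and "\<And>a b. 2 * f b * h a = h (a + b) + h (a - b)"
    and "(f a)\<^sup>2 \<noteq> 1"
  shows "g x * h a = h x * g a"
proof -
  define w where "w y = g y * h a - h y * g a" for y
  have shift_add: "w (y + a) = f a * w y" for y
    unfolding w_def sine_addition_law[OF assms(1,2)] sine_addition_law[OF assms(3,4)]
    by (simp add: algebra_simps)
  have shift_diff: "w (y - a) = f a * w y" for y
    unfolding w_def sine_addition_law[OF assms(1,2)] sine_addition_law[OF assms(3,4)]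
    by (simp add: algebra_simps)
  have "w x = f a * w (x + a)"
    using shift_diff[of "x + a"] by simp
  also have "\<dots> = (f a)\<^sup>2 * w x"
    using shift_add[of x] by (simp add: power2_eq_square)
  finally have "w x = 0"
    using assms(5) by (metis mult_cancel_right1)
  then show ?thesis
    by (simp add: w_def)
qed

lemma qnorm_qscale: "qnorm (qscale r q) = \<bar>r\<bar> * qnorm q"
proof -
  have "(r * qc0 q)\<^sup>2 + (r * qc1 q)\<^sup>2 + (r * qc2 q)\<^sup>2 + (r * qc3 q)\<^sup>2
        = r\<^sup>2 * ((qc0 q)\<^sup>2 + (qc1 q)\<^sup>2 + (qc2 q)\<^sup>2 + (qc3 q)\<^sup>2)"
    by (simp add: power_mult_distrib algebra_simps)
  then show ?thesis
    by (simp add: qnorm_def qscale_def real_sqrt_mult)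
qed

lemma qnorm_nonneg: "qnorm q \<ge> 0"
  by (simp add: qnorm_def)

lemma qnorm_eq_0_iff: "qnorm q = 0 \<longleftrightarrow> q = Quat 0 0 0 0"
  by (cases q) (simp add: qnorm_def add_nonneg_eq_0_iff)

lemma imag_unit_normalize:
  assumes "qIm q \<noteq> Quat 0 0 0 0"
  shows "imag_unit (qscale (1 / qnorm (qIm q)) (qIm q))"
proof -
  have "qnorm (qIm q) > 0"
    using assms qnorm_nonneg[of "qIm q"] qnorm_eq_0_iff[of "qIm q"] by linarith
  then show ?thesis
    unfolding imag_unit_def qnorm_qscale by (simp add: qRe_def qscale_def qIm_def)
qed

lemma qIm_eq_0_if_qnorm_le_1:
  assumes "qnorm q \<le> 1" and "(qRe q)\<^sup>2 = 1"
  shows "qIm q = Quat 0 0 0 0"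
proof -
  have "(qc0 q)\<^sup>2 + (qc1 q)\<^sup>2 + (qc2 q)\<^sup>2 + (qc3 q)\<^sup>2 \<le> 1"
    using assms(1) by (simp add: qnorm_def)
  then have "(qc1 q)\<^sup>2 + (qc2 q)\<^sup>2 + (qc3 q)\<^sup>2 \<le> 0"
    using assms(2) by (simp add: qRe_def)
  then have "(qc1 q)\<^sup>2 = 0" "(qc2 q)\<^sup>2 = 0" "(qc3 q)\<^sup>2 = 0"
    using zero_le_power2[of "qc1 q"] zero_le_power2[of "qc2 q"] zero_le_power2[of "qc3 q"]
    by linarith+
  then show ?thesis
    by (simp add: qIm_def)
qed

definition im_parallel :: "quat \<Rightarrow> quat \<Rightarrow> bool" where
  "im_parallel p q \<longleftrightarrow>
     qc1 p * qc2 q = qc2 p * qc1 q \<and> qc2 p * qc3 q = qc3 p * qc2 q \<and> qc1 p * qc3 q = qc3 p * qc1 q"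

lemma im_parallel_qscale: "im_parallel p q \<Longrightarrow> im_parallel p (qscale r q)"
  by (simp add: im_parallel_def qscale_def algebra_simps)

lemma im_parallel_qIm_iff: "im_parallel p (qIm q) \<longleftrightarrow> im_parallel p q"
  by (simp add: im_parallel_def qIm_def)

lemma im_parallel_sym: "im_parallel p q \<Longrightarrow> im_parallel q p"
  by (simp add: im_parallel_def mult.commute)

lemma im_parallel_if_qIm_eq_0: "qIm p = Quat 0 0 0 0 \<Longrightarrow> im_parallel p q"
  by (simp add: im_parallel_def qIm_def)

lemma proportional_to_unit_vector:
  fixes u1 u2 u3 v1 v2 v3 :: real
  assumes "u1\<^sup>2 + u2\<^sup>2 + u3\<^sup>2 = 1"
    and "v1 * u2 = v2 * u1" "v2 * u3 = v3 * u2" "v1 * u3 = v3 * u1"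
  shows "v1 = (v1 * u1 + v2 * u2 + v3 * u3) * u1"
    and "v2 = (v1 * u1 + v2 * u2 + v3 * u3) * u2"
    and "v3 = (v1 * u1 + v2 * u2 + v3 * u3) * u3"
proof -
  let ?s = "v1 * u1 + v2 * u2 + v3 * u3"
  have "v1 - ?s * u1 = v1 * (u1\<^sup>2 + u2\<^sup>2 + u3\<^sup>2) - ?s * u1"
    using assms(1) by simp
  also have "\<dots> = u2 * (v1 * u2 - v2 * u1) + u3 * (v1 * u3 - v3 * u1)"
    by (simp add: power2_eq_square algebra_simps)
  finally show "v1 = ?s * u1"
    using assms(2,4) by simp
  have "v2 - ?s * u2 = v2 * (u1\<^sup>2 + u2\<^sup>2 + u3\<^sup>2) - ?s * u2"
    using assms(1) by simp
  also have "\<dots> = u3 * (v2 * u3 - v3 * u2) - u1 * (v1 * u2 - v2 * u1)"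
    by (simp add: power2_eq_square algebra_simps)
  finally show "v2 = ?s * u2"
    using assms(2,3) by simp
  have "v3 - ?s * u3 = v3 * (u1\<^sup>2 + u2\<^sup>2 + u3\<^sup>2) - ?s * u3"
    using assms(1) by simp
  also have "\<dots> = - u1 * (v1 * u3 - v3 * u1) - u2 * (v2 * u3 - v3 * u2)"
    by (simp add: power2_eq_square algebra_simps)
  finally show "v3 = ?s * u3"
    using assms(3,4) by simp
qed

lemma im_parallel_imp_in_C_slice:
  assumes "imag_unit I" and "im_parallel q I"
  shows "q \<in> C_slice I"
proof -
  have re: "qc0 I = 0" and unit: "(qc1 I)\<^sup>2 + (qc2 I)\<^sup>2 + (qc3 I)\<^sup>2 = 1"
    using assms(1) by (auto simp: imag_unit_def qRe_def qnorm_def)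
  note coords = proportional_to_unit_vector[OF unit, of "qc1 q" "qc2 q" "qc3 q"]
  let ?t = "qc1 q * qc1 I + qc2 q * qc2 I + qc3 q * qc3 I"
  have "q = qadd (qof_real (qc0 q)) (qscale ?t I)"
    using assms(2) coords re by (cases q) (auto simp: im_parallel_def qadd_def qof_real_def qscale_def)
  then show ?thesis
    unfolding C_slice_def by blast
qed

lemma im_parallel_values:
  fixes \<phi> :: "'g::ab_group_add \<Rightarrow> quat"
  assumes "\<And>x. qnorm (\<phi> x) \<le> 1" and "qIm (\<phi> 0) = Quat 0 0 0 0"
    and "\<And>a b. qscale (2 * qRe (\<phi> b)) (qIm (\<phi> a)) = qadd (qIm (\<phi> (a + b))) (qIm (\<phi> (a - b)))"
  shows "im_parallel (\<phi> x) (\<phi> a)"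
proof (cases "(qRe (\<phi> a))\<^sup>2 = 1")
  case True
  with assms(1) have "qIm (\<phi> a) = Quat 0 0 0 0"
    by (rule qIm_eq_0_if_qnorm_le_1)
  then show ?thesis
    by (rule im_parallel_sym[OF im_parallel_if_qIm_eq_0])
next
  case False
  define f where "f y = qRe (\<phi> y)" for y
  have "2 * f b * qc1 (\<phi> a) = qc1 (\<phi> (a + b)) + qc1 (\<phi> (a - b))"
    and "2 * f b * qc2 (\<phi> a) = qc2 (\<phi> (a + b)) + qc2 (\<phi> (a - b))"
    and "2 * f b * qc3 (\<phi> a) = qc3 (\<phi> (a + b)) + qc3 (\<phi> (a - b))" for a b
    using assms(3)[where a = a and b = b] by (simp_all add: f_def qscale_def qadd_def qIm_def)
  moreover have "qc1 (\<phi> 0) = 0" "qc2 (\<phi> 0) = 0" "qc3 (\<phi> 0) = 0"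
    using assms(2) by (simp_all add: qIm_def)
  moreover have "(f a)\<^sup>2 \<noteq> 1"
    using False by (simp add: f_def)
  ultimately show ?thesis
    unfolding im_parallel_def
    by (intro conjI sine_solutions_proportional[where f = f]) simp_all
qed

theorem mainTheorem10:
  fixes \<phi> :: "'g::ab_group_add \<Rightarrow> quat"
  assumes "\<phi> 0 = qof_real 1"
    and "bdd_above (range (\<lambda>g. qnorm (\<phi> g)))"
    and "(SUP g. qnorm (\<phi> g)) = 1"
    and "\<And>a b. 2 * qRe (\<phi> b) * qRe (\<phi> a) = qRe (\<phi> (a + b)) + qRe (\<phi> (a - b))"
    and "\<And>a b. qscale (2 * qRe (\<phi> b)) (qIm (\<phi> a)) = qadd (qIm (\<phi> (a + b))) (qIm (\<phi> (a - b)))"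
  shows "\<exists>I. imag_unit I \<and> range \<phi> \<subseteq> C_slice I"
proof -
  have "qnorm (\<phi> x) \<le> 1" for x
    using cSUP_upper[OF UNIV_I assms(2)] assms(3) by simp
  moreover have "qIm (\<phi> 0) = Quat 0 0 0 0"
    using assms(1) by (simp add: qIm_def qof_real_def)
  ultimately have parallel: "im_parallel (\<phi> x) (\<phi> a)" for x a
    using assms(5) by (rule im_parallel_values)
  obtain I where "imag_unit I" and "\<forall>x. im_parallel (\<phi> x) I"
  proof (cases "\<exists>a. qIm (\<phi> a) \<noteq> Quat 0 0 0 0")
    case True
    then obtain a where "qIm (\<phi> a) \<noteq> Quat 0 0 0 0" by blast
    then show ?thesis
      using that imag_unit_normalize parallel im_parallel_qscale im_parallel_qIm_iff by blast
  next
    case False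
    then have "im_parallel (\<phi> x) I" for x I
      using im_parallel_if_qIm_eq_0 by blast
    moreover have "imag_unit (Quat 0 1 0 0)"
      by (simp add: imag_unit_def qRe_def qnorm_def)
    ultimately show ?thesis
      using that by blast
  qed
  then show ?thesis
    using im_parallel_imp_in_C_slice by blast
qed

end
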